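(* Let $\Gamma\subseteq A$ be $\Bbbk$-algebras, $\sim$ an equivalence relation on $\mathrm{cfs}(\Gamma)$, and suppose $\Gamma$ is a strong Harish-Chandra block subalgebra of $A$ with respect to $\sim$. Let $B,C,D\in\mathrm{cfs}(\Gamma)/{\sim}$, $\mathfrak m\in\mathcal W(B)$ and $\mathfrak l\in\mathcal W(D)$. Then there is $\mathfrak n\in\mathcal W(C)$ such that $$A/(\mathfrak lA+A\mathfrak n)\cong(A/\mathfrak lA)(C)\quad\text{and}\quad A/(\mathfrak nA+A\mathfrak m)\cong(A/A\mathfrak m)(C)$$ as $(\Gamma,\Gamma)$-bimodules.
   Context: $\mathrm{cfs}(\Gamma)$: maximal two-sided ideals $\mathfrak m$ with $\dim\Gamma/\mathfrak m<\infty$. For a class $B$, $\mathcal W(B)=\{\mathfrak m_1\cdots\mathfrak m_k:k\ge0,\mathfrak m_i\in B\}$. For a left $\Gamma$-module $V$, $V(B)=\{v:\mathfrak mv=0$ for some $\mathfrak m\in\mathcal W(B)\}$; for a right $\Gamma$-module (such as $A/\mathfrak lA$), $V(B)=\{v:v\mathfrak m=0$ for some $\mathfrak m\in\mathcal W(B)\}$. A strong block module is one with $V=\bigoplus_BV(B)$ and each $V(B)$ killed by some element of $\mathcal W(B)$. $\Gamma$ is a strong Harish-Chandra block subalgebra of $A$ if for all $B$ and $\mathfrak m\in\mathcal W(B)$, the left module $A/A\mathfrak m$ and the right module $A/\mathfrak mA$ are strong block modules. *)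

theory Defs
  imports Complex_Main
begin

text \<open>The ambient k-algebra A is the whole type 'a (a unital ring), with scalar
multiplication by the field 'k given by scale. Gamma is a subset G of 'a.\<close>

definition k_algebra :: "('k::field \<Rightarrow> 'a::ring_1 \<Rightarrow> 'a) \<Rightarrow> bool" where
  "k_algebra scale \<longleftrightarrow> vector_space scale \<and>
     (\<forall>c x y. scale c (x * y) = scale c x * y \<and> scale c (x * y) = x * scale c y)"

definition subalgebra :: "('k::field \<Rightarrow> 'a::ring_1 \<Rightarrow> 'a) \<Rightarrow> 'a set \<Rightarrow> bool" where
  "subalgebra scale G \<longleftrightarrow> 1 \<in> G \<and> 0 \<in> G \<and>
     (\<forall>x\<in>G. \<forall>y\<in>G. x + y \<in> G \<and> x * y \<in> G) \<and> (\<forall>c. \<forall>x\<in>G. scale c x \<in> G)"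

definition two_sided_ideal :: "'a::ring_1 set \<Rightarrow> 'a set \<Rightarrow> bool" where
  "two_sided_ideal G I \<longleftrightarrow> I \<subseteq> G \<and> 0 \<in> I \<and> (\<forall>x\<in>I. \<forall>y\<in>I. x + y \<in> I) \<and>
     (\<forall>x\<in>I. - x \<in> I) \<and> (\<forall>g\<in>G. \<forall>x\<in>I. g * x \<in> I \<and> x * g \<in> I)"

definition maximal_ideal :: "'a::ring_1 set \<Rightarrow> 'a set \<Rightarrow> bool" where
  "maximal_ideal G I \<longleftrightarrow> two_sided_ideal G I \<and> I \<noteq> G \<and>
     (\<forall>J. two_sided_ideal G J \<and> I \<subseteq> J \<longrightarrow> J = I \<or> J = G)"

definition fin_codim :: "('k::field \<Rightarrow> 'a::ring_1 \<Rightarrow> 'a) \<Rightarrow> 'a set \<Rightarrow> 'a set \<Rightarrow> bool" where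
  "fin_codim scale G I \<longleftrightarrow>
     (\<exists>S. finite S \<and> S \<subseteq> G \<and> (\<forall>g\<in>G. \<exists>s\<in>module.span scale S. g - s \<in> I))"

definition cfs :: "('k::field \<Rightarrow> 'a::ring_1 \<Rightarrow> 'a) \<Rightarrow> 'a set \<Rightarrow> 'a set set" where
  "cfs scale G = {m. maximal_ideal G m \<and> fin_codim scale G m}"

definition sprod :: "'a::ring_1 set \<Rightarrow> 'a set \<Rightarrow> 'a set" where
  "sprod I J = {(\<Sum>i<n. x i * y i) | (n::nat) x y. \<forall>i<n. x i \<in> I \<and> y i \<in> J}"

definition ssum :: "'a::ring_1 set \<Rightarrow> 'a set \<Rightarrow> 'a set" where
  "ssum I J = {x + y | x y. x \<in> I \<and> y \<in> J}"

fun ideal_prod :: "'a::ring_1 set \<Rightarrow> 'a set list \<Rightarrow> 'a set" where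
  "ideal_prod G [] = G"
| "ideal_prod G (m # ms) = sprod m (ideal_prod G ms)"

definition Wd :: "'a::ring_1 set \<Rightarrow> 'a set set \<Rightarrow> 'a set set" where
  "Wd G B = {ideal_prod G ms | ms. set ms \<subseteq> B}"

definition coset :: "'a::ring_1 set \<Rightarrow> 'a \<Rightarrow> 'a set" where
  "coset N a = {a + x | x. x \<in> N}"

definition quot :: "'a::ring_1 set \<Rightarrow> 'a set set" where
  "quot N = range (coset N)"

definition cadd :: "'a::ring_1 set \<Rightarrow> 'a set \<Rightarrow> 'a set" where
  "cadd X Y = {x + y | x y. x \<in> X \<and> y \<in> Y}"

definition lact :: "'a::ring_1 set \<Rightarrow> 'a \<Rightarrow> 'a set \<Rightarrow> 'a set" where
  "lact N g X = {g * x + n | x n. x \<in> X \<and> n \<in> N}"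

definition ract :: "'a::ring_1 set \<Rightarrow> 'a set \<Rightarrow> 'a \<Rightarrow> 'a set" where
  "ract N X g = {x * g + n | x n. x \<in> X \<and> n \<in> N}"

text \<open>V(B) for the left module V = A/N and for the right module V = A/N.\<close>
definition lblock :: "'a::ring_1 set \<Rightarrow> 'a set \<Rightarrow> 'a set set \<Rightarrow> 'a set set" where
  "lblock G N B = {X \<in> quot N. \<exists>m\<in>Wd G B. \<forall>g\<in>m. lact N g X = N}"

definition rblock :: "'a::ring_1 set \<Rightarrow> 'a set \<Rightarrow> 'a set set \<Rightarrow> 'a set set" where
  "rblock G N B = {X \<in> quot N. \<exists>m\<in>Wd G B. \<forall>g\<in>m. ract N X g = N}"

text \<open>V is the internal direct sum
  of the V(B), B ranging over the classes cls, and each V(B) is killed by some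
  element of W(B).\<close>
definition strong_block_left :: "'a::ring_1 set \<Rightarrow> 'a set set set \<Rightarrow> 'a set \<Rightarrow> bool" where
  "strong_block_left G cls N \<longleftrightarrow>
     (\<forall>a. \<exists>F f. finite F \<and> F \<subseteq> cls \<and> (\<forall>B\<in>F. coset N (f B) \<in> lblock G N B) \<and>
              coset N a = coset N (\<Sum>B\<in>F. f B)) \<and>
     (\<forall>F f. finite F \<and> F \<subseteq> cls \<and> (\<forall>B\<in>F. coset N (f B) \<in> lblock G N B) \<and>
              coset N (\<Sum>B\<in>F. f B) = N \<longrightarrow> (\<forall>B\<in>F. coset N (f B) = N)) \<and>
     (\<forall>B\<in>cls. \<exists>m\<in>Wd G B. \<forall>X\<in>lblock G N B. \<forall>g\<in>m. lact N g X = N)"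

definition strong_block_right :: "'a::ring_1 set \<Rightarrow> 'a set set set \<Rightarrow> 'a set \<Rightarrow> bool" where
  "strong_block_right G cls N \<longleftrightarrow>
     (\<forall>a. \<exists>F f. finite F \<and> F \<subseteq> cls \<and> (\<forall>B\<in>F. coset N (f B) \<in> rblock G N B) \<and>
              coset N a = coset N (\<Sum>B\<in>F. f B)) \<and>
     (\<forall>F f. finite F \<and> F \<subseteq> cls \<and> (\<forall>B\<in>F. coset N (f B) \<in> rblock G N B) \<and>
              coset N (\<Sum>B\<in>F. f B) = N \<longrightarrow> (\<forall>B\<in>F. coset N (f B) = N)) \<and>
     (\<forall>B\<in>cls. \<exists>m\<in>Wd G B. \<forall>X\<in>rblock G N B. \<forall>g\<in>m. ract N X g = N)"

definition strong_HC_block :: "('k::field \<Rightarrow> 'a::ring_1 \<Rightarrow> 'a) \<Rightarrow> 'a set \<Rightarrow> 'a set rel \<Rightarrow> bool" where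
  "strong_HC_block scale G R \<longleftrightarrow>
     (\<forall>B\<in>cfs scale G // R. \<forall>m\<in>Wd G B.
        strong_block_left G (cfs scale G // R) (sprod UNIV m) \<and>
        strong_block_right G (cfs scale G // R) (sprod m UNIV))"

definition bimod_iso :: "'a::ring_1 set \<Rightarrow> 'a set \<Rightarrow> 'a set \<Rightarrow> 'a set set \<Rightarrow> ('a set \<Rightarrow> 'a set) \<Rightarrow> bool" where
  "bimod_iso G N1 N2 T \<phi> \<longleftrightarrow> bij_betw \<phi> (quot N1) T \<and>
     (\<forall>X\<in>quot N1. \<forall>Y\<in>quot N1. \<phi> (cadd X Y) = cadd (\<phi> X) (\<phi> Y)) \<and>
     (\<forall>X\<in>quot N1. \<forall>g\<in>G. \<phi> (lact N1 g X) = lact N2 g (\<phi> X) \<and>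
                          \<phi> (ract N1 X g) = ract N2 (\<phi> X) g)"

end

theory Submission
  imports Defs
begin

text \<open>
  Let V = A/lA, a right module over Gamma, and let n in W(C) lie below annihilators of both
  (A/lA)(C) and (A/Am)(C) (such an n exists because W(C) is closed under products, which only get
  smaller). V is the direct sum of its blocks V(B), each killed by some m_B in W(B), and elements
  of W(B) and W(C) are comaximal for B different from C, since distinct maximal ideals are.
  Writing 1 = x + y with x in n and y in m_B shows V(B) = V(B) x, so V(B) lies in V n; conversely
  V n lies in the sum of the V(B) with B different from C, because V(C) n = 0. Hence V is the
  direct sum of V(C) and V n, and A/(lA + An) = V/V n is isomorphic to V(C). The left module A/Am
  is symmetric.
\<close>

definition additive_subgroup :: "'a::ab_group_add set \<Rightarrow> bool" where
  "additive_subgroup N \<longleftrightarrow> 0 \<in> N \<and> (\<forall>x\<in>N. \<forall>y\<in>N. x + y \<in> N) \<and> (\<forall>x\<in>N. - x \<in> N)"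

lemma additive_subgroup_zero: "additive_subgroup N \<Longrightarrow> 0 \<in> N"
  unfolding additive_subgroup_def by blast

lemma additive_subgroup_add: "additive_subgroup N \<Longrightarrow> x \<in> N \<Longrightarrow> y \<in> N \<Longrightarrow> x + y \<in> N"
  unfolding additive_subgroup_def by blast

lemma additive_subgroup_uminus: "additive_subgroup N \<Longrightarrow> x \<in> N \<Longrightarrow> - x \<in> N"
  unfolding additive_subgroup_def by blast

lemma additive_subgroup_diff: "additive_subgroup N \<Longrightarrow> x \<in> N \<Longrightarrow> y \<in> N \<Longrightarrow> x - y \<in> N"
  using additive_subgroup_add additive_subgroup_uminus by fastforce

lemma additive_subgroup_sum:
  "additive_subgroup N \<Longrightarrow> (\<And>i. i \<in> F \<Longrightarrow> f i \<in> N) \<Longrightarrow> sum f F \<in> N"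
  by (induction F rule: infinite_finite_induct) (auto simp: additive_subgroup_def)

definition sub_bimodule :: "'a::ring_1 set \<Rightarrow> 'a set \<Rightarrow> bool" where
  "sub_bimodule G N \<longleftrightarrow> additive_subgroup N \<and> (\<forall>g\<in>G. \<forall>x\<in>N. g * x \<in> N \<and> x * g \<in> N)"

lemma sub_bimoduleD:
  assumes "sub_bimodule G N"
  shows "additive_subgroup N" "\<And>g x. g \<in> G \<Longrightarrow> x \<in> N \<Longrightarrow> g * x \<in> N"
    "\<And>g x. g \<in> G \<Longrightarrow> x \<in> N \<Longrightarrow> x * g \<in> N"
  using assms unfolding sub_bimodule_def by blast+

definition subring :: "'a::ring_1 set \<Rightarrow> bool" where
  "subring G \<longleftrightarrow> 1 \<in> G \<and> additive_subgroup G \<and> (\<forall>x\<in>G. \<forall>y\<in>G. x * y \<in> G)"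

lemma subring_if_subalgebra:
  assumes "k_algebra scale" and G: "subalgebra scale G"
  shows "subring G"
proof -
  interpret module scale
    using assms(1) unfolding k_algebra_def vector_space_def module_def by blast
  have "- x \<in> G" if "x \<in> G" for x
  proof -
    have "scale (- 1) x \<in> G"
      using G that unfolding subalgebra_def by blast
    moreover have "scale (- 1) x = - x"
      using scale_minus_left[of 1 x] by simp
    ultimately show ?thesis by simp
  qed
  moreover have "1 \<in> G" "0 \<in> G" "\<forall>x\<in>G. \<forall>y\<in>G. x + y \<in> G \<and> x * y \<in> G"
    using G unfolding subalgebra_def by blast+
  ultimately show ?thesis
    unfolding subring_def additive_subgroup_def by blast
qed

lemma two_sided_ideal_iff: "two_sided_ideal G I \<longleftrightarrow> I \<subseteq> G \<and> sub_bimodule G I"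
  unfolding two_sided_ideal_def sub_bimodule_def additive_subgroup_def by auto

lemma ssumI: "a \<in> I \<Longrightarrow> b \<in> J \<Longrightarrow> a + b \<in> ssum I J"
  unfolding ssum_def by blast

lemma ssumE: "x \<in> ssum I J \<Longrightarrow> (\<And>a b. x = a + b \<Longrightarrow> a \<in> I \<Longrightarrow> b \<in> J \<Longrightarrow> P) \<Longrightarrow> P"
  unfolding ssum_def by blast

lemma ssum_commute: "ssum I J = ssum J I"
proof -
  have "x \<in> ssum J I" if "x \<in> ssum I J" for x I J
    using that by (metis add.commute ssumE ssumI)
  then show ?thesis by blast
qed

lemma subset_ssum_left: "0 \<in> Q \<Longrightarrow> P \<subseteq> ssum P Q"
  using ssumI[of _ P 0 Q] by (simp add: subset_iff)

lemma subset_ssum_right: "0 \<in> P \<Longrightarrow> Q \<subseteq> ssum P Q"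
  using subset_ssum_left ssum_commute by metis

lemma sub_bimodule_ssum:
  assumes P: "sub_bimodule G P" and Q: "sub_bimodule G Q"
  shows "sub_bimodule G (ssum P Q)"
proof -
  have P0: "0 \<in> P" and P_add: "\<And>x y. x \<in> P \<Longrightarrow> y \<in> P \<Longrightarrow> x + y \<in> P"
    and P_neg: "\<And>x. x \<in> P \<Longrightarrow> - x \<in> P"
    and P_mult: "\<And>g x. g \<in> G \<Longrightarrow> x \<in> P \<Longrightarrow> g * x \<in> P \<and> x * g \<in> P"
    using P unfolding sub_bimodule_def additive_subgroup_def by blast+
  have Q0: "0 \<in> Q" and Q_add: "\<And>x y. x \<in> Q \<Longrightarrow> y \<in> Q \<Longrightarrow> x + y \<in> Q"
    and Q_neg: "\<And>x. x \<in> Q \<Longrightarrow> - x \<in> Q"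
    and Q_mult: "\<And>g x. g \<in> G \<Longrightarrow> x \<in> Q \<Longrightarrow> g * x \<in> Q \<and> x * g \<in> Q"
    using Q unfolding sub_bimodule_def additive_subgroup_def by blast+
  have "0 \<in> ssum P Q"
    using ssumI[OF P0 Q0] by simp
  moreover have "x + y \<in> ssum P Q" if xy: "x \<in> ssum P Q" "y \<in> ssum P Q" for x y
  proof -
    obtain a b c d where "x = a + b" "y = c + d" "a \<in> P" "c \<in> P" "b \<in> Q" "d \<in> Q"
      using xy by (metis ssumE)
    moreover have "(a + b) + (c + d) = (a + c) + (b + d)"
      by (simp add: algebra_simps)
    ultimately show ?thesis
      using ssumI[OF P_add Q_add] by metis
  qed
  moreover have "- x \<in> ssum P Q" if x: "x \<in> ssum P Q" for x
  proof -
    obtain a b where "x = a + b" "a \<in> P" "b \<in> Q"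
      using x by (rule ssumE)
    moreover have "- (a + b) = - a + - b"
      by simp
    ultimately show ?thesis
      using ssumI[OF P_neg Q_neg] by metis
  qed
  moreover have "g * x \<in> ssum P Q \<and> x * g \<in> ssum P Q" if g: "g \<in> G" and x: "x \<in> ssum P Q" for g x
  proof -
    obtain a b where "x = a + b" "a \<in> P" "b \<in> Q"
      using x by (rule ssumE)
    moreover have "g * (a + b) = g * a + g * b" "(a + b) * g = a * g + b * g"
      by (simp_all add: algebra_simps)
    ultimately show ?thesis
      using g P_mult Q_mult ssumI by metis
  qed
  ultimately show ?thesis
    unfolding sub_bimodule_def additive_subgroup_def by blast
qed

lemma zero_in_sprod: "0 \<in> sprod I J"
  unfolding sprod_def by (rule CollectI, rule exI[of _ 0]) simp

lemma sprod_add_mult: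
  assumes "s \<in> sprod I J" "x \<in> I" "y \<in> J"
  shows "s + x * y \<in> sprod I J"
proof -
  obtain n :: nat and xs ys where s: "s = (\<Sum>i<n. xs i * ys i)" "\<forall>i<n. xs i \<in> I \<and> ys i \<in> J"
    using assms(1) unfolding sprod_def by blast
  let ?xs = "xs(n := x)" and ?ys = "ys(n := y)"
  have "(\<Sum>i<n. ?xs i * ?ys i) = s"
    unfolding s by (rule sum.cong) auto
  then have "s + x * y = (\<Sum>i<Suc n. ?xs i * ?ys i)"
    by simp
  moreover have "\<forall>i<Suc n. ?xs i \<in> I \<and> ?ys i \<in> J"
    using s assms by (auto simp: less_Suc_eq)
  ultimately show ?thesis
    unfolding sprod_def by blast
qed

lemma sprod_induct [consumes 1, case_names zero step]:
  assumes "s \<in> sprod I J" and "P 0"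
    and "\<And>s x y. s \<in> sprod I J \<Longrightarrow> P s \<Longrightarrow> x \<in> I \<Longrightarrow> y \<in> J \<Longrightarrow> P (s + x * y)"
  shows "P s"
proof -
  obtain n :: nat and xs ys where s: "s = (\<Sum>i<n. xs i * ys i)" "\<forall>i<n. xs i \<in> I \<and> ys i \<in> J"
    using assms(1) unfolding sprod_def by blast
  have "k \<le> n \<longrightarrow> (\<Sum>i<k. xs i * ys i) \<in> sprod I J \<and> P (\<Sum>i<k. xs i * ys i)" for k
  proof (induction k)
    case 0
    show ?case
      using zero_in_sprod assms(2) by simp
  next
    case (Suc k)
    show ?case
    proof
      assume "Suc k \<le> n"
      then have "(\<Sum>i<k. xs i * ys i) \<in> sprod I J" "P (\<Sum>i<k. xs i * ys i)"
          "xs k \<in> I" "ys k \<in> J"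
        using Suc s(2) by auto
      then show "(\<Sum>i<Suc k. xs i * ys i) \<in> sprod I J \<and> P (\<Sum>i<Suc k. xs i * ys i)"
        using sprod_add_mult assms(3) by simp
    qed
  qed
  then show ?thesis
    using s by blast
qed

lemma mult_in_sprod: "x \<in> I \<Longrightarrow> y \<in> J \<Longrightarrow> x * y \<in> sprod I J"
  using sprod_add_mult[OF zero_in_sprod] by fastforce

lemma sprod_subset:
  assumes "0 \<in> S" and "\<And>u x y. u \<in> S \<Longrightarrow> x \<in> I \<Longrightarrow> y \<in> J \<Longrightarrow> u + x * y \<in> S"
  shows "sprod I J \<subseteq> S"
proof
  fix s assume "s \<in> sprod I J"
  then show "s \<in> S"
    by (induction s rule: sprod_induct) (use assms in auto)
qed

lemma sprod_mono: "I \<subseteq> I' \<Longrightarrow> J \<subseteq> J' \<Longrightarrow> sprod I J \<subseteq> sprod I' J'"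
  unfolding sprod_def by blast

lemma sprod_add:
  assumes "s \<in> sprod I J" "t \<in> sprod I J"
  shows "s + t \<in> sprod I J"
  using assms(2)
proof (induction t rule: sprod_induct)
  case (step t x y)
  then show ?case
    using sprod_add_mult[of "s + t" I J x y] by (simp add: add.assoc)
qed (use assms in simp)

lemma sprod_uminus:
  assumes "s \<in> sprod I J" "\<And>y. y \<in> J \<Longrightarrow> - y \<in> J"
  shows "- s \<in> sprod I J"
  using assms(1)
proof (induction s rule: sprod_induct)
  case (step s x y)
  then show ?case
    using sprod_add_mult[of "- s" I J x "- y"] assms(2) by (simp add: add.commute)
qed (simp add: zero_in_sprod)

lemma sprod_mult_left:
  assumes "s \<in> sprod I J" "\<And>x. x \<in> I \<Longrightarrow> g * x \<in> I"
  shows "g * s \<in> sprod I J"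
  using assms(1)
proof (induction s rule: sprod_induct)
  case (step s x y)
  then show ?case
    using sprod_add_mult[of "g * s" I J "g * x" y] assms(2) by (simp add: distrib_left mult.assoc)
qed (simp add: zero_in_sprod)

lemma sprod_mult_right:
  assumes "s \<in> sprod I J" "\<And>y. y \<in> J \<Longrightarrow> y * g \<in> J"
  shows "s * g \<in> sprod I J"
  using assms(1)
proof (induction s rule: sprod_induct)
  case (step s x y)
  then show ?case
    using sprod_add_mult[of "s * g" I J x "y * g"] assms(2) by (simp add: distrib_right mult.assoc)
qed (simp add: zero_in_sprod)

lemma sub_bimodule_sprod:
  assumes "sub_bimodule G I" "sub_bimodule G J"
  shows "sub_bimodule G (sprod I J)"
  using assms zero_in_sprod sprod_add sprod_uminus sprod_mult_left sprod_mult_right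
  unfolding sub_bimodule_def additive_subgroup_def by metis

lemma sprod_subset_left:
  assumes "sub_bimodule G I" "J \<subseteq> G"
  shows "sprod I J \<subseteq> I"
  using assms by (intro sprod_subset) (auto simp: sub_bimodule_def additive_subgroup_def subset_iff)

lemma sprod_subset_right:
  assumes "I \<subseteq> G" "sub_bimodule G J"
  shows "sprod I J \<subseteq> J"
  using assms by (intro sprod_subset) (auto simp: sub_bimodule_def additive_subgroup_def subset_iff)

lemma two_sided_ideal_sprod:
  assumes "two_sided_ideal G I" "two_sided_ideal G J"
  shows "two_sided_ideal G (sprod I J)"
  using assms sub_bimodule_sprod sprod_subset_left unfolding two_sided_ideal_iff by blast

lemma two_sided_ideal_self: "subring G \<Longrightarrow> two_sided_ideal G G"
  unfolding subring_def two_sided_ideal_iff sub_bimodule_def by blast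

lemma two_sided_ideal_ideal_prod:
  assumes "subring G" "\<forall>m\<in>set ms. two_sided_ideal G m"
  shows "two_sided_ideal G (ideal_prod G ms)"
  using assms(2) by (induction ms) (auto intro: two_sided_ideal_sprod two_sided_ideal_self[OF assms(1)])

lemma two_sided_ideal_Wd:
  assumes "subring G" "B \<subseteq> cfs scale G" "n \<in> Wd G B"
  shows "two_sided_ideal G n"
proof -
  obtain ms where "n = ideal_prod G ms" "set ms \<subseteq> B"
    using assms(3) unfolding Wd_def by blast
  moreover have "\<forall>m\<in>set ms. two_sided_ideal G m"
    using calculation assms(2) unfolding cfs_def maximal_ideal_def by blast
  ultimately show ?thesis
    using two_sided_ideal_ideal_prod[OF assms(1)] by simp
qed

lemma ideal_prod_append_subset:
  assumes "subring G" "\<forall>m\<in>set (ms1 @ ms2). two_sided_ideal G m"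
  shows "ideal_prod G (ms1 @ ms2) \<subseteq> ideal_prod G ms1 \<inter> ideal_prod G ms2"
  using assms(2)
proof (induction ms1)
  case Nil
  then show ?case
    using two_sided_ideal_ideal_prod[OF assms(1), of ms2] by (auto simp: two_sided_ideal_def)
next
  case (Cons a ms1)
  have "ideal_prod G (ms1 @ ms2) \<subseteq> ideal_prod G ms2" "two_sided_ideal G (ideal_prod G ms2)"
       "two_sided_ideal G a"
    using Cons two_sided_ideal_ideal_prod[OF assms(1), of ms2] by auto
  then have "sprod a (ideal_prod G (ms1 @ ms2)) \<subseteq> ideal_prod G ms2"
    using sprod_mono[of a a] sprod_subset_right[of a G "ideal_prod G ms2"]
    unfolding two_sided_ideal_iff by blast
  then show ?case
    using Cons sprod_mono[of a a] by auto
qed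

lemma Wd_lower_bound:
  assumes "subring G" "B \<subseteq> cfs scale G" "m1 \<in> Wd G B" "m2 \<in> Wd G B"
  shows "\<exists>n\<in>Wd G B. n \<subseteq> m1 \<and> n \<subseteq> m2"
proof -
  obtain ms1 ms2 where ms: "m1 = ideal_prod G ms1" "m2 = ideal_prod G ms2" "set (ms1 @ ms2) \<subseteq> B"
    using assms(3,4) unfolding Wd_def by auto
  have "\<forall>m\<in>set (ms1 @ ms2). two_sided_ideal G m"
    using ms(3) assms(2) unfolding cfs_def maximal_ideal_def by blast
  then have "ideal_prod G (ms1 @ ms2) \<subseteq> m1 \<inter> m2"
    unfolding ms by (rule ideal_prod_append_subset[OF assms(1)])
  moreover have "ideal_prod G (ms1 @ ms2) \<in> Wd G B"
    using ms(3) unfolding Wd_def by blast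
  ultimately show ?thesis
    by blast
qed

definition comaximal :: "'a::ring_1 set \<Rightarrow> 'a set \<Rightarrow> bool" where
  "comaximal I J \<longleftrightarrow> (\<exists>i\<in>I. \<exists>j\<in>J. i + j = 1)"

lemma comaximal_commute: "comaximal I J \<longleftrightarrow> comaximal J I"
  unfolding comaximal_def by (metis add.commute)

lemma comaximal_sprod:
  assumes I: "two_sided_ideal G I" and "J \<subseteq> G" "comaximal I J" "comaximal I K"
  shows "comaximal I (sprod J K)"
proof -
  obtain i1 j where ij: "i1 \<in> I" "j \<in> J" "i1 + j = 1"
    using assms(3) unfolding comaximal_def by blast
  obtain i2 k where ik: "i2 \<in> I" "k \<in> K" "i2 + k = 1"
    using assms(4) unfolding comaximal_def by blast
  have "(i1 + j * i2) + j * k = i1 + j * (i2 + k)"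
    by (simp add: distrib_left add.assoc)
  also have "\<dots> = 1"
    using ij ik by simp
  finally have "(i1 + j * i2) + j * k = 1" .
  moreover have "i1 + j * i2 \<in> I"
    using I ij ik \<open>J \<subseteq> G\<close> unfolding two_sided_ideal_def by blast
  moreover have "j * k \<in> sprod J K"
    using ij ik by (simp add: mult_in_sprod)
  ultimately show ?thesis
    unfolding comaximal_def by blast
qed

lemma comaximal_ideal_prod:
  assumes "subring G" "two_sided_ideal G I"
    and "\<forall>m\<in>set ms. two_sided_ideal G m \<and> comaximal I m"
  shows "comaximal I (ideal_prod G ms)"
  using assms(3)
proof (induction ms)
  case Nil
  have "0 \<in> I" "1 \<in> G"
    using assms(1,2) unfolding two_sided_ideal_def subring_def by auto
  then show ?case
    unfolding comaximal_def by force
next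
  case (Cons m ms)
  then show ?case
    using comaximal_sprod[OF assms(2), of m] by (auto simp: two_sided_ideal_def)
qed

lemma comaximal_maximal_ideals:
  assumes "subring G" "maximal_ideal G m1" "maximal_ideal G m2" "m1 \<noteq> m2"
  shows "comaximal m1 m2"
proof -
  have m1: "two_sided_ideal G m1" and m2: "two_sided_ideal G m2"
    using assms(2,3) unfolding maximal_ideal_def by blast+
  have "0 \<in> m1" "0 \<in> m2"
    using m1 m2 unfolding two_sided_ideal_def by blast+
  then have sub: "m1 \<subseteq> ssum m1 m2" "m2 \<subseteq> ssum m1 m2"
    using subset_ssum_left ssum_commute by metis+
  have "ssum m1 m2 \<subseteq> G"
  proof
    fix x assume "x \<in> ssum m1 m2"
    then obtain a b where "x = a + b" "a \<in> m1" "b \<in> m2"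
      by (rule ssumE)
    then show "x \<in> G"
      using m1 m2 assms(1) unfolding two_sided_ideal_def subring_def additive_subgroup_def by blast
  qed
  then have "two_sided_ideal G (ssum m1 m2)"
    using m1 m2 sub_bimodule_ssum unfolding two_sided_ideal_iff by blast
  then have "ssum m1 m2 = G"
    using assms sub unfolding maximal_ideal_def by blast
  moreover have "1 \<in> G"
    using assms(1) unfolding subring_def by blast
  ultimately show ?thesis
    unfolding comaximal_def by (metis ssumE)
qed

lemma comaximal_Wd:
  assumes G: "subring G" and R: "equiv (cfs scale G) R"
    and C: "C \<in> cfs scale G // R" and C': "C' \<in> cfs scale G // R" and "C \<noteq> C'"
    and n: "n \<in> Wd G C" and n': "n' \<in> Wd G C'"
  shows "comaximal n n'"
proof -
  obtain ms ms' where ms: "n = ideal_prod G ms" "set ms \<subseteq> C"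
    and ms': "n' = ideal_prod G ms'" "set ms' \<subseteq> C'"
    using n n' unfolding Wd_def by blast
  have "C \<inter> C' = {}"
    using quotient_disj[OF R C C'] \<open>C \<noteq> C'\<close> by blast
  moreover have "C \<union> C' \<subseteq> cfs scale G"
    using C C' R by (auto dest: in_quotient_imp_subset)
  ultimately have max: "\<forall>m\<in>set ms \<union> set ms'. maximal_ideal G m"
    and disj: "\<forall>m\<in>set ms. \<forall>m'\<in>set ms'. m \<noteq> m'"
    using ms ms' unfolding cfs_def by blast+
  then have ideals: "\<forall>m\<in>set ms \<union> set ms'. two_sided_ideal G m"
    unfolding maximal_ideal_def by blast
  have "comaximal m n'" if "m \<in> set ms" for m
    unfolding ms'(1) using that max disj ideals comaximal_maximal_ideals[OF G]
    by (intro comaximal_ideal_prod[OF G]) auto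
  then have "comaximal n' n"
    unfolding ms(1) using ideals ms'(1) two_sided_ideal_ideal_prod[OF G, of ms']
    by (intro comaximal_ideal_prod[OF G]) (auto simp: comaximal_commute)
  then show ?thesis
    by (simp add: comaximal_commute)
qed

definition block_sum :: "'a::ab_group_add set \<Rightarrow> 'b set \<Rightarrow> ('b \<Rightarrow> 'a set) \<Rightarrow> 'a set" where
  "block_sum N S V = {a. \<exists>F f. finite F \<and> F \<subseteq> S \<and> (\<forall>B\<in>F. f B \<in> V B) \<and> a - sum f F \<in> N}"

definition direct_mod :: "'a::ab_group_add set \<Rightarrow> 'b set \<Rightarrow> ('b \<Rightarrow> 'a set) \<Rightarrow> bool" where
  "direct_mod N S V \<longleftrightarrow>
     (\<forall>F f. finite F \<and> F \<subseteq> S \<and> (\<forall>B\<in>F. f B \<in> V B) \<and> sum f F \<in> N \<longrightarrow> (\<forall>B\<in>F. f B \<in> N))"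

lemma block_sumI:
  "finite F \<Longrightarrow> F \<subseteq> S \<Longrightarrow> (\<forall>B\<in>F. f B \<in> V B) \<Longrightarrow> a - sum f F \<in> N \<Longrightarrow>
    a \<in> block_sum N S V"
  unfolding block_sum_def by blast

lemma block_sumE:
  assumes "a \<in> block_sum N S V"
  obtains F f where "finite F" "F \<subseteq> S" "\<forall>B\<in>F. f B \<in> V B" "a - sum f F \<in> N"
  using assms unfolding block_sum_def by blast

lemma subset_block_sum: "N \<subseteq> block_sum N S V"
  by (auto intro: block_sumI[of "{}"])

lemma block_sum_add:
  assumes N: "additive_subgroup N" and "a \<in> block_sum N S V" "b \<in> block_sum N S V"
    and V: "\<And>B. B \<in> S \<Longrightarrow> additive_subgroup (V B)"
  shows "a + b \<in> block_sum N S V"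
proof -
  obtain F f where F: "finite F" "F \<subseteq> S" "\<forall>B\<in>F. f B \<in> V B" "a - sum f F \<in> N"
    using assms(2) by (rule block_sumE)
  obtain F' f' where F': "finite F'" "F' \<subseteq> S" "\<forall>B\<in>F'. f' B \<in> V B" "b - sum f' F' \<in> N"
    using assms(3) by (rule block_sumE)
  define g where "g B = (if B \<in> F then f B else 0) + (if B \<in> F' then f' B else 0)" for B
  have "(\<Sum>B\<in>F \<union> F'. if B \<in> F then f B else 0) = sum f F"
    "(\<Sum>B\<in>F \<union> F'. if B \<in> F' then f' B else 0) = sum f' F'"
    using F(1) F'(1) by (simp_all add: sum.inter_restrict[symmetric] Int_absorb1)
  then have "sum g (F \<union> F') = sum f F + sum f' F'"
    unfolding g_def sum.distrib by simp
  then have "(a + b) - sum g (F \<union> F') = (a - sum f F) + (b - sum f' F')"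
    by (simp add: algebra_simps)
  then have "(a + b) - sum g (F \<union> F') \<in> N"
    using additive_subgroup_add[OF N F(4) F'(4)] by (simp only:)
  moreover have "\<forall>B\<in>F \<union> F'. g B \<in> V B"
    using F(2,3) F'(2,3) V additive_subgroup_add additive_subgroup_zero unfolding g_def by fastforce
  ultimately show ?thesis
    using F(1,2) F'(1,2) by (intro block_sumI[of "F \<union> F'"]) auto
qed

lemma additive_image_block_sum:
  assumes h: "additive h" and N: "additive_subgroup N" "\<And>k. k \<in> N \<Longrightarrow> h k \<in> N"
    and V: "\<And>B v. B \<in> S - {C} \<Longrightarrow> v \<in> V B \<Longrightarrow> h v \<in> V B" "\<And>v. v \<in> V C \<Longrightarrow> h v \<in> N"
    and a: "a \<in> block_sum N S V"
  shows "h a \<in> block_sum N (S - {C}) V"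
proof -
  obtain F f where F: "finite F" "F \<subseteq> S" "\<forall>B\<in>F. f B \<in> V B" "a - sum f F \<in> N"
    using a by (rule block_sumE)
  define c where "c = (if C \<in> F then f C else 0)"
  have "sum f F = c + sum f (F - {C})"
    using F(1) unfolding c_def by (simp add: sum.remove)
  then have "a - sum f (F - {C}) = (a - sum f F) + c"
    by simp
  have "h a - (\<Sum>B\<in>F - {C}. h (f B)) = h (a - sum f (F - {C}))"
    by (simp add: additive.diff[OF h] additive.sum[OF h])
  also have "\<dots> = h (a - sum f F) + h c"
    unfolding \<open>a - sum f (F - {C}) = (a - sum f F) + c\<close> by (rule additive.add[OF h])
  finally have "h a - (\<Sum>B\<in>F - {C}. h (f B)) = h (a - sum f F) + h c" .
  moreover have "h c \<in> N"
    using F(3) V(2) additive.zero[OF h] additive_subgroup_zero[OF N(1)] unfolding c_def by auto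
  ultimately have "h a - (\<Sum>B\<in>F - {C}. h (f B)) \<in> N"
    using additive_subgroup_add[OF N(1) N(2)[OF F(4)]] by simp
  then show ?thesis
    using F V(1) by (intro block_sumI[of "F - {C}"]) auto
qed

lemma block_sum_UNIV_split:
  assumes "additive_subgroup N1" "N \<subseteq> N1" and "block_sum N S V = UNIV" "C \<in> S" "0 \<in> V C"
    and "\<And>B. B \<in> S - {C} \<Longrightarrow> V B \<subseteq> N1"
  shows "\<exists>c\<in>V C. a - c \<in> N1"
proof -
  have "a \<in> block_sum N S V"
    using assms(3) by simp
  then obtain F f where F: "finite F" "F \<subseteq> S" "\<forall>B\<in>F. f B \<in> V B" "a - sum f F \<in> N"
    by (rule block_sumE)
  define c where "c = (if C \<in> F then f C else 0)"
  have "sum f F = c + sum f (F - {C})"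
    using F(1) unfolding c_def by (simp add: sum.remove)
  then have "a - c = (a - sum f F) + sum f (F - {C})"
    by (simp add: algebra_simps)
  moreover have "sum f (F - {C}) \<in> N1"
    using F assms(1,6) by (intro additive_subgroup_sum) auto
  moreover have "a - sum f F \<in> N1"
    using F(4) assms(2) by blast
  ultimately have "a - c \<in> N1"
    using additive_subgroup_add[OF assms(1)] by metis
  moreover have "c \<in> V C"
    using F(3) assms(5) unfolding c_def by simp
  ultimately show ?thesis
    by blast
qed

lemma direct_mod_inter_others:
  assumes N: "additive_subgroup N" and V: "additive_subgroup (V C)"
    and "direct_mod N S V" "C \<in> S" "c \<in> V C" "c \<in> block_sum N (S - {C}) V"
  shows "c \<in> N"
proof -
  obtain F f where F: "finite F" "F \<subseteq> S - {C}" "\<forall>B\<in>F. f B \<in> V B" "c - sum f F \<in> N"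
    using assms(6) by (rule block_sumE)
  define f' where "f' = f(C := - c)"
  have "C \<notin> F"
    using F(2) by blast
  then have "sum f' F = sum f F"
    unfolding f'_def by (intro sum.cong) auto
  then have "sum f' (insert C F) = - (c - sum f F)"
    using sum.insert[OF F(1) \<open>C \<notin> F\<close>, of f'] by (simp add: f'_def)
  then have "sum f' (insert C F) \<in> N"
    using additive_subgroup_uminus[OF N F(4)] by simp
  moreover have "f' B \<in> V B" if "B \<in> insert C F" for B
    using that F(3) additive_subgroup_uminus[OF V assms(5)] unfolding f'_def by auto
  ultimately have "f' C \<in> N"
    using assms(3,4) F(1,2) unfolding direct_mod_def by blast
  then show ?thesis
    using additive_subgroup_uminus[OF N, of "- c"] by (simp add: f'_def)
qed

lemma coset_eq_iff:
  assumes N: "additive_subgroup N"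
  shows "coset N a = coset N b \<longleftrightarrow> a - b \<in> N"
proof
  assume "coset N a = coset N b"
  moreover have "b \<in> coset N b"
    using additive_subgroup_zero[OF N] unfolding coset_def by force
  ultimately obtain x where "b = a + x" "x \<in> N"
    unfolding coset_def by blast
  then show "a - b \<in> N"
    using additive_subgroup_uminus[OF N] by simp
next
  assume ab: "a - b \<in> N"
  have "a + x \<in> coset N b" if "x \<in> N" for x
    using additive_subgroup_add[OF N ab that] unfolding coset_def by (force simp: algebra_simps)
  moreover have "b + x \<in> coset N a" if "x \<in> N" for x
    using additive_subgroup_diff[OF N that ab] unfolding coset_def by (force simp: algebra_simps)
  ultimately show "coset N a = coset N b"
    unfolding coset_def by blast
qed

lemma coset_eq_self_iff: "additive_subgroup N \<Longrightarrow> coset N a = N \<longleftrightarrow> a \<in> N"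
  using coset_eq_iff[of N a 0] by (simp add: coset_def)

lemma cadd_coset:
  assumes N: "additive_subgroup N"
  shows "cadd (coset N a) (coset N b) = coset N (a + b)"
proof (intro set_eqI iffI)
  fix z assume "z \<in> cadd (coset N a) (coset N b)"
  then obtain x y where "z = (a + b) + (x + y)" "x \<in> N" "y \<in> N"
    unfolding cadd_def coset_def by (force simp: algebra_simps)
  then show "z \<in> coset N (a + b)"
    using additive_subgroup_add[OF N] unfolding coset_def by blast
next
  fix z assume "z \<in> coset N (a + b)"
  then obtain x where "z = (a + x) + (b + 0)" "x \<in> N"
    unfolding coset_def by (force simp: algebra_simps)
  then show "z \<in> cadd (coset N a) (coset N b)"
    using additive_subgroup_zero[OF N] unfolding cadd_def coset_def by blast
qed

lemma cadd_coset_superset: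
  assumes N1: "additive_subgroup N1" and "N \<subseteq> N1" "0 \<in> N"
  shows "cadd (coset N a) N1 = coset N1 a"
proof (intro set_eqI iffI)
  fix z assume "z \<in> cadd (coset N a) N1"
  then obtain x y where "z = a + (x + y)" "x \<in> N1" "y \<in> N1"
    using assms(2) unfolding cadd_def coset_def by (force simp: algebra_simps)
  then show "z \<in> coset N1 a"
    using additive_subgroup_add[OF N1] unfolding coset_def by blast
next
  fix z assume "z \<in> coset N1 a"
  then obtain x where "z = (a + 0) + x" "x \<in> N1"
    unfolding coset_def by force
  then show "z \<in> cadd (coset N a) N1"
    using assms(3) unfolding cadd_def coset_def by blast
qed

lemma lact_coset:
  assumes N: "additive_subgroup N" and "\<And>k. k \<in> N \<Longrightarrow> g * k \<in> N"
  shows "lact N g (coset N a) = coset N (g * a)"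
proof (intro set_eqI iffI)
  fix z assume "z \<in> lact N g (coset N a)"
  then obtain x k where "z = g * a + (g * x + k)" "x \<in> N" "k \<in> N"
    unfolding lact_def coset_def by (force simp: algebra_simps)
  then show "z \<in> coset N (g * a)"
    using additive_subgroup_add[OF N] assms(2) unfolding coset_def by blast
next
  fix z assume "z \<in> coset N (g * a)"
  then obtain x where "z = g * (a + 0) + x" "x \<in> N"
    unfolding coset_def by force
  then show "z \<in> lact N g (coset N a)"
    using additive_subgroup_zero[OF N] unfolding lact_def coset_def by blast
qed

lemma ract_coset:
  assumes N: "additive_subgroup N" and "\<And>k. k \<in> N \<Longrightarrow> k * g \<in> N"
  shows "ract N (coset N a) g = coset N (a * g)"
proof (intro set_eqI iffI)
  fix z assume "z \<in> ract N (coset N a) g"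
  then obtain x k where "z = a * g + (x * g + k)" "x \<in> N" "k \<in> N"
    unfolding ract_def coset_def by (force simp: algebra_simps)
  then show "z \<in> coset N (a * g)"
    using additive_subgroup_add[OF N] assms(2) unfolding coset_def by blast
next
  fix z assume "z \<in> coset N (a * g)"
  then obtain x where "z = (a + 0) * g + x" "x \<in> N"
    unfolding coset_def by force
  then show "z \<in> ract N (coset N a) g"
    using additive_subgroup_zero[OF N] unfolding ract_def coset_def by blast
qed

text \<open>A is regarded as a left (Left) or right (Right) module over Gamma; act s v g is the action
  of g on v. One development then covers both A/Am and A/lA.\<close>
datatype side = Left | Right

fun act :: "side \<Rightarrow> 'a::ring_1 \<Rightarrow> 'a \<Rightarrow> 'a" where
  "act Left v g = g * v"
| "act Right v g = v * g"

lemma additive_act: "additive (\<lambda>v. act s v g)"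
  by (cases s) (simp_all add: additive_def distrib_left distrib_right)

lemma act_add_right: "act s v (g + h) = act s v g + act s v h"
  by (cases s) (simp_all add: distrib_left distrib_right)

lemma act_one: "act s v 1 = v"
  by (cases s) simp_all

lemma act_in_sub_bimodule: "sub_bimodule G U \<Longrightarrow> g \<in> G \<Longrightarrow> v \<in> U \<Longrightarrow> act s v g \<in> U"
  by (cases s) (simp_all add: sub_bimodule_def)

definition killed :: "side \<Rightarrow> 'a::ring_1 set \<Rightarrow> 'a set \<Rightarrow> 'a set" where
  "killed s N m = {v. \<forall>g\<in>m. act s v g \<in> N}"

lemma killed_antimono: "m' \<subseteq> m \<Longrightarrow> killed s N m \<subseteq> killed s N m'"
  unfolding killed_def by blast

lemma additive_subgroup_killed:
  assumes "additive_subgroup N"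
  shows "additive_subgroup (killed s N m)"
proof -
  interpret additive "\<lambda>v. act s v g" for g
    by (rule additive_act)
  show ?thesis
    using additive_subgroup_zero[OF assms] additive_subgroup_add[OF assms]
      additive_subgroup_uminus[OF assms]
    unfolding additive_subgroup_def killed_def by (simp add: zero add minus)
qed

lemma sub_bimodule_killed:
  assumes N: "sub_bimodule G N" and m: "two_sided_ideal G m"
  shows "sub_bimodule G (killed s N m)"
proof -
  have "h * v \<in> killed s N m \<and> v * h \<in> killed s N m" if h: "h \<in> G" and v: "v \<in> killed s N m" for h v
  proof -
    have hg: "g * h \<in> m" "h * g \<in> m" if "g \<in> m" for g
      using m h that unfolding two_sided_ideal_def by blast+
    have vg: "act s v g \<in> N" if "g \<in> m" for g
      using v that unfolding killed_def by blast
    show ?thesis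
    proof (cases s)
      case Left
      then show ?thesis
        using hg vg sub_bimoduleD(3)[OF N h] by (auto simp: killed_def mult.assoc[symmetric])
    next
      case Right
      then show ?thesis
        using hg vg sub_bimoduleD(2)[OF N h] by (auto simp: killed_def mult.assoc)
    qed
  qed
  then show ?thesis
    using additive_subgroup_killed sub_bimoduleD(1)[OF N] unfolding sub_bimodule_def by blast
qed

text \<open>With x + y = 1, x in n and y in m: v = v x + v y, and v y lies in N.\<close>
lemma killed_comaximal_mem:
  assumes N1: "additive_subgroup N1" "N \<subseteq> N1" and "comaximal n m"
    and "\<And>x. x \<in> n \<Longrightarrow> act s v x \<in> N1" and "v \<in> killed s N m"
  shows "v \<in> N1"
proof -
  obtain x y where "x \<in> n" "y \<in> m" "x + y = 1"
    using assms(3) unfolding comaximal_def by blast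
  then have "v = act s v x + act s v y"
    by (metis act_add_right act_one)
  moreover have "act s v y \<in> N1"
    using assms(5) \<open>y \<in> m\<close> N1(2) unfolding killed_def by blast
  ultimately show ?thesis
    using additive_subgroup_add[OF N1(1)] assms(4) \<open>x \<in> n\<close> by metis
qed

text \<open>The preimage in A of the block V(B) of V = A/N.\<close>
definition block_elems :: "side \<Rightarrow> 'a::ring_1 set \<Rightarrow> 'a set \<Rightarrow> 'a set set \<Rightarrow> 'a set" where
  "block_elems s G N B = (\<Union>m\<in>Wd G B. killed s N m)"

fun act_span :: "side \<Rightarrow> 'a::ring_1 set \<Rightarrow> 'a set" where
  "act_span Left n = sprod n UNIV"
| "act_span Right n = sprod UNIV n"

lemma act_in_act_span: "x \<in> n \<Longrightarrow> act s v x \<in> act_span s n"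
  by (cases s) (simp_all add: mult_in_sprod)

lemma act_span_subset:
  assumes "0 \<in> S" "\<And>u v x. u \<in> S \<Longrightarrow> x \<in> n \<Longrightarrow> u + act s v x \<in> S"
  shows "act_span s n \<subseteq> S"
proof (cases s)
  case Left
  show ?thesis
    unfolding Left act_span.simps by (rule sprod_subset) (use assms Left in auto)
next
  case Right
  show ?thesis
    unfolding Right act_span.simps by (rule sprod_subset) (use assms Right in auto)
qed

lemma sub_bimodule_act_span:
  assumes "two_sided_ideal G n"
  shows "sub_bimodule G (act_span s n)"
proof -
  have "sub_bimodule G (UNIV :: 'a set)"
    unfolding sub_bimodule_def additive_subgroup_def by simp
  then show ?thesis
    using assms by (cases s) (simp_all add: two_sided_ideal_iff sub_bimodule_sprod)
qed

text \<open>A/N is a strong block module, stated for representatives in A.\<close>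
definition strong_block :: "side \<Rightarrow> 'a::ring_1 set \<Rightarrow> 'a set set set \<Rightarrow> 'a set \<Rightarrow> bool" where
  "strong_block s G cls N \<longleftrightarrow>
     block_sum N cls (block_elems s G N) = UNIV \<and> direct_mod N cls (block_elems s G N) \<and>
     (\<forall>B\<in>cls. \<exists>m\<in>Wd G B. block_elems s G N B \<subseteq> killed s N m)"

lemma strong_block_if_quotient_blocks:
  assumes N: "additive_subgroup N"
    and blk: "\<And>B c. coset N c \<in> blk B \<longleftrightarrow> c \<in> block_elems s G N B"
    and qact: "\<And>c g. qact (coset N c) g = N \<longleftrightarrow> act s c g \<in> N"
    and decomp: "\<forall>a. \<exists>F f. finite F \<and> F \<subseteq> cls \<and> (\<forall>B\<in>F. coset N (f B) \<in> blk B) \<and>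
                   coset N a = coset N (\<Sum>B\<in>F. f B)"
    and direct: "\<forall>F f. finite F \<and> F \<subseteq> cls \<and> (\<forall>B\<in>F. coset N (f B) \<in> blk B) \<and>
                   coset N (\<Sum>B\<in>F. f B) = N \<longrightarrow> (\<forall>B\<in>F. coset N (f B) = N)"
    and uniform: "\<forall>B\<in>cls. \<exists>m\<in>Wd G B. \<forall>X\<in>blk B. \<forall>g\<in>m. qact X g = N"
  shows "strong_block s G cls N"
proof -
  have "a \<in> block_sum N cls (block_elems s G N)" for a
  proof -
    obtain F f where F: "finite F" "F \<subseteq> cls" "\<forall>B\<in>F. coset N (f B) \<in> blk B"
      "coset N a = coset N (\<Sum>B\<in>F. f B)"
      using spec[OF decomp, of a] by blast
    have "\<forall>B\<in>F. f B \<in> block_elems s G N B"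
      using F(3) by (simp add: blk)
    moreover have "a - sum f F \<in> N"
      using F(4) coset_eq_iff[OF N] by blast
    ultimately show ?thesis
      using F(1,2) by (rule block_sumI[rotated 2])
  qed
  moreover have "direct_mod N cls (block_elems s G N)"
    unfolding direct_mod_def
  proof (intro allI impI)
    fix F f
    assume F: "finite F \<and> F \<subseteq> cls \<and> (\<forall>B\<in>F. f B \<in> block_elems s G N B) \<and> sum f F \<in> N"
    then have "\<forall>B\<in>F. coset N (f B) \<in> blk B" "coset N (sum f F) = N"
      by (simp_all add: blk coset_eq_self_iff[OF N])
    then have "\<forall>B\<in>F. coset N (f B) = N"
      using direct F by blast
    then show "\<forall>B\<in>F. f B \<in> N"
      by (simp add: coset_eq_self_iff[OF N])
  qed
  moreover have "\<exists>m\<in>Wd G B. block_elems s G N B \<subseteq> killed s N m" if "B \<in> cls" for B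
  proof -
    obtain m where "m \<in> Wd G B" and m: "\<forall>X\<in>blk B. \<forall>g\<in>m. qact X g = N"
      using uniform \<open>B \<in> cls\<close> by blast
    have "c \<in> killed s N m" if "c \<in> block_elems s G N B" for c
      using m blk[of c B] qact[of c] that unfolding killed_def by blast
    then show ?thesis
      using \<open>m \<in> Wd G B\<close> by blast
  qed
  ultimately show ?thesis
    unfolding strong_block_def by blast
qed

lemma coset_in_quot: "coset N a \<in> quot N"
  unfolding quot_def by blast

lemma rblock_coset_iff:
  assumes "additive_subgroup N" "\<And>k a. k \<in> N \<Longrightarrow> k * a \<in> N"
  shows "coset N c \<in> rblock G N B \<longleftrightarrow> c \<in> block_elems Right G N B"
  unfolding rblock_def block_elems_def killed_def
  by (simp add: coset_in_quot ract_coset assms coset_eq_self_iff[OF assms(1)])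

lemma lblock_coset_iff:
  assumes "additive_subgroup N" "\<And>k a. k \<in> N \<Longrightarrow> a * k \<in> N"
  shows "coset N c \<in> lblock G N B \<longleftrightarrow> c \<in> block_elems Left G N B"
  unfolding lblock_def block_elems_def killed_def
  by (simp add: coset_in_quot lact_coset assms coset_eq_self_iff[OF assms(1)])

lemma rblock_eq_image:
  assumes "additive_subgroup N" "\<And>k a. k \<in> N \<Longrightarrow> k * a \<in> N"
  shows "rblock G N B = coset N ` block_elems Right G N B"
  using rblock_coset_iff[of N c G B for c] assms unfolding rblock_def quot_def by auto

lemma lblock_eq_image:
  assumes "additive_subgroup N" "\<And>k a. k \<in> N \<Longrightarrow> a * k \<in> N"
  shows "lblock G N B = coset N ` block_elems Left G N B"
  using lblock_coset_iff[of N c G B for c] assms unfolding lblock_def quot_def by auto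

lemma strong_block_if_strong_block_right:
  assumes N: "additive_subgroup N" "\<And>k a. k \<in> N \<Longrightarrow> k * a \<in> N"
    and "strong_block_right G cls N"
  shows "strong_block Right G cls N"
proof -
  note sb = assms(3)[unfolded strong_block_right_def]
  have blk: "\<And>B c. coset N c \<in> rblock G N B \<longleftrightarrow> c \<in> block_elems Right G N B"
    by (simp add: rblock_coset_iff N)
  have qact: "\<And>c g. ract N (coset N c) g = N \<longleftrightarrow> act Right c g \<in> N"
    by (simp add: ract_coset N coset_eq_self_iff[OF N(1)])
  show ?thesis
    by (rule strong_block_if_quotient_blocks[where qact = "ract N", OF N(1) blk qact
          sb[THEN conjunct1] sb[THEN conjunct2, THEN conjunct1] sb[THEN conjunct2, THEN conjunct2]])
qed

lemma strong_block_if_strong_block_left: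
  assumes N: "additive_subgroup N" "\<And>k a. k \<in> N \<Longrightarrow> a * k \<in> N"
    and "strong_block_left G cls N"
  shows "strong_block Left G cls N"
proof -
  note sb = assms(3)[unfolded strong_block_left_def]
  have blk: "\<And>B c. coset N c \<in> lblock G N B \<longleftrightarrow> c \<in> block_elems Left G N B"
    by (simp add: lblock_coset_iff N)
  have qact: "\<And>c g. (\<lambda>X g. lact N g X) (coset N c) g = N \<longleftrightarrow> act Left c g \<in> N"
    by (simp add: lact_coset N coset_eq_self_iff[OF N(1)])
  show ?thesis
    by (rule strong_block_if_quotient_blocks[where qact = "\<lambda>X g. lact N g X", OF N(1) blk qact
          sb[THEN conjunct1] sb[THEN conjunct2, THEN conjunct1] sb[THEN conjunct2, THEN conjunct2]])
qed

lemma bimod_iso_inv_into: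
  assumes bij: "bij_betw \<psi> T (quot N1)"
    and add: "\<forall>X\<in>T. \<forall>Y\<in>T. cadd X Y \<in> T \<and> \<psi> (cadd X Y) = cadd (\<psi> X) (\<psi> Y)"
    and act: "\<forall>X\<in>T. \<forall>g\<in>G. lact N g X \<in> T \<and> ract N X g \<in> T \<and>
      \<psi> (lact N g X) = lact N1 g (\<psi> X) \<and> \<psi> (ract N X g) = ract N1 (\<psi> X) g"
  shows "bimod_iso G N1 N T (inv_into T \<psi>)"
proof -
  let ?\<phi> = "inv_into T \<psi>"
  have inj: "inj_on \<psi> T" and im: "\<psi> ` T = quot N1"
    using bij by (auto simp: bij_betw_def)
  have \<phi>_in: "?\<phi> Z \<in> T" and \<psi>_\<phi>: "\<psi> (?\<phi> Z) = Z" if "Z \<in> quot N1" for Z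
    using that im by (auto intro: inv_into_into simp: f_inv_into_f)
  have \<phi>_\<psi>: "?\<phi> (\<psi> X) = X" if "X \<in> T" for X
    using inj that by (rule inv_into_f_f)
  show ?thesis
    unfolding bimod_iso_def
  proof (intro conjI ballI)
    show "bij_betw ?\<phi> (quot N1) T"
      using bij by (rule bij_betw_inv_into)
  next
    fix X Y assume X: "X \<in> quot N1" and Y: "Y \<in> quot N1"
    have "cadd (?\<phi> X) (?\<phi> Y) \<in> T" "\<psi> (cadd (?\<phi> X) (?\<phi> Y)) = cadd X Y"
      using add \<phi>_in[OF X] \<phi>_in[OF Y] \<psi>_\<phi>[OF X] \<psi>_\<phi>[OF Y] by simp_all
    then show "?\<phi> (cadd X Y) = cadd (?\<phi> X) (?\<phi> Y)"
      using \<phi>_\<psi> by metis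
  next
    fix X g assume X: "X \<in> quot N1" and g: "g \<in> G"
    have "lact N g (?\<phi> X) \<in> T" "\<psi> (lact N g (?\<phi> X)) = lact N1 g X"
      "ract N (?\<phi> X) g \<in> T" "\<psi> (ract N (?\<phi> X) g) = ract N1 X g"
      using act \<phi>_in[OF X] \<psi>_\<phi>[OF X] g by simp_all
    then show "?\<phi> (lact N1 g X) = lact N g (?\<phi> X)" "?\<phi> (ract N1 X g) = ract N (?\<phi> X) g"
      using \<phi>_\<psi> by metis+
  qed
qed

lemma bimod_iso_quotient_complement:
  assumes N: "sub_bimodule G N" and N1: "sub_bimodule G N1" "N \<subseteq> N1"
    and V: "sub_bimodule G V" and inter: "V \<inter> N1 \<subseteq> N" and plus: "\<And>a. \<exists>c\<in>V. a - c \<in> N1"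
  shows "\<exists>\<phi>. bimod_iso G N1 N (coset N ` V) \<phi>"
proof -
  note N' = sub_bimoduleD[OF N] and N1' = sub_bimoduleD[OF N1(1)] and V' = sub_bimoduleD[OF V]
  define \<psi> where "\<psi> X = cadd X N1" for X
  have \<psi>: "\<psi> (coset N c) = coset N1 c" for c
    unfolding \<psi>_def using N1'(1) N1(2) additive_subgroup_zero[OF N'(1)] by (rule cadd_coset_superset)
  have inj: "inj_on \<psi> (coset N ` V)"
  proof (rule inj_onI)
    fix X Y assume "X \<in> coset N ` V" "Y \<in> coset N ` V" "\<psi> X = \<psi> Y"
    then obtain c d where cd: "X = coset N c" "Y = coset N d" "c \<in> V" "d \<in> V"
      and "coset N1 c = coset N1 d"
      using \<psi> by auto
    then have "c - d \<in> V \<inter> N1"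
      using coset_eq_iff[OF N1'(1)] additive_subgroup_diff[OF V'(1)] by auto
    then show "X = Y"
      using inter coset_eq_iff[OF N'(1)] cd(1,2) by blast
  qed
  moreover have "\<psi> ` coset N ` V = quot N1"
  proof
    show "\<psi> ` coset N ` V \<subseteq> quot N1"
      using \<psi> coset_in_quot by auto
    show "quot N1 \<subseteq> \<psi> ` coset N ` V"
    proof
      fix Z assume "Z \<in> quot N1"
      then obtain a where "Z = coset N1 a"
        unfolding quot_def by blast
      moreover obtain c where "c \<in> V" "a - c \<in> N1"
        using plus by blast
      ultimately show "Z \<in> \<psi> ` coset N ` V"
        using \<psi> coset_eq_iff[OF N1'(1)] by blast
    qed
  qed
  ultimately have bij: "bij_betw \<psi> (coset N ` V) (quot N1)"
    unfolding bij_betw_def by blast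
  have add: "\<forall>X\<in>coset N ` V. \<forall>Y\<in>coset N ` V. cadd X Y \<in> coset N ` V \<and>
      \<psi> (cadd X Y) = cadd (\<psi> X) (\<psi> Y)"
    using cadd_coset[OF N'(1)] cadd_coset[OF N1'(1)] \<psi> additive_subgroup_add[OF V'(1)] by auto
  have act: "\<forall>X\<in>coset N ` V. \<forall>g\<in>G. lact N g X \<in> coset N ` V \<and> ract N X g \<in> coset N ` V \<and>
      \<psi> (lact N g X) = lact N1 g (\<psi> X) \<and> \<psi> (ract N X g) = ract N1 (\<psi> X) g"
    using V'(2,3) \<psi> by (auto simp: lact_coset ract_coset N'(1) N'(2,3) N1'(1) N1'(2,3))
  show ?thesis
    using bimod_iso_inv_into[OF bij add act] by blast
qed

locale strong_block_quotient =
  fixes scale :: "'k::field \<Rightarrow> 'a::ring_1 \<Rightarrow> 'a" and G :: "'a set" and R :: "'a set rel"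
    and s :: side and N :: "'a set"
  assumes subring: "subring G" and equiv: "equiv (cfs scale G) R"
    and sub_bimodule: "sub_bimodule G N" and act_closed: "\<And>k a. k \<in> N \<Longrightarrow> act s k a \<in> N"
    and strong_block: "strong_block s G (cfs scale G // R) N"
begin

abbreviation "cls \<equiv> cfs scale G // R"
abbreviation "V \<equiv> block_elems s G N"

lemma additive_subgroup: "additive_subgroup N"
  using sub_bimodule by (rule sub_bimoduleD)

lemma two_sided_ideal_Wd_class: "B \<in> cls \<Longrightarrow> m \<in> Wd G B \<Longrightarrow> two_sided_ideal G m"
  using two_sided_ideal_Wd[OF subring in_quotient_imp_subset[OF equiv]] by blast

lemma block_elems_eq_killed:
  assumes "B \<in> cls"
  shows "\<exists>m\<in>Wd G B. V B = killed s N m"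
proof -
  obtain m where "m \<in> Wd G B" "V B \<subseteq> killed s N m"
    using strong_block assms unfolding strong_block_def by blast
  moreover have "killed s N m \<subseteq> V B"
    using \<open>m \<in> Wd G B\<close> unfolding block_elems_def by blast
  ultimately show ?thesis
    by blast
qed

lemma sub_bimodule_block_elems: "B \<in> cls \<Longrightarrow> sub_bimodule G (V B)"
  using block_elems_eq_killed sub_bimodule_killed[OF sub_bimodule two_sided_ideal_Wd_class] by metis

lemma block_elems_subset_kernel:
  assumes "C \<in> cls" "n \<in> Wd G C" "B \<in> cls" "B \<noteq> C"
  shows "V B \<subseteq> ssum N (act_span s n)"
proof
  fix v assume "v \<in> V B"
  obtain m where m: "m \<in> Wd G B" "V B = killed s N m"
    using block_elems_eq_killed assms(3) by blast
  have span: "sub_bimodule G (act_span s n)"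
    using two_sided_ideal_Wd_class[OF assms(1,2)] by (rule sub_bimodule_act_span)
  have N1: "additive_subgroup (ssum N (act_span s n))"
    using sub_bimodule_ssum[OF sub_bimodule span] by (rule sub_bimoduleD)
  have N_N1: "N \<subseteq> ssum N (act_span s n)"
    using span by (intro subset_ssum_left additive_subgroup_zero sub_bimoduleD)
  have "comaximal n m"
    using comaximal_Wd[OF subring equiv assms(1,3) _ assms(2) m(1)] assms(4) by blast
  moreover have "act s v x \<in> ssum N (act_span s n)" if "x \<in> n" for x
    using act_in_act_span[OF that] subset_ssum_right additive_subgroup_zero[OF additive_subgroup]
    by blast
  moreover have "v \<in> killed s N m"
    using \<open>v \<in> V B\<close> m(2) by simp
  ultimately show "v \<in> ssum N (act_span s n)"
    by (rule killed_comaximal_mem[OF N1 N_N1])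
qed

lemma kernel_subset_block_sum:
  assumes C: "C \<in> cls" and n: "n \<in> Wd G C" "V C \<subseteq> killed s N n"
  shows "ssum N (act_span s n) \<subseteq> block_sum N (cls - {C}) V"
proof -
  have add: "u + w \<in> block_sum N (cls - {C}) V"
    if "u \<in> block_sum N (cls - {C}) V" "w \<in> block_sum N (cls - {C}) V" for u w
    using additive_subgroup that
    by (rule block_sum_add) (use sub_bimodule_block_elems sub_bimoduleD(1) in blast)
  have act: "act s v x \<in> block_sum N (cls - {C}) V" if x: "x \<in> n" for v x
  proof (rule additive_image_block_sum[OF additive_act additive_subgroup act_closed])
    have "x \<in> G"
      using two_sided_ideal_Wd_class[OF C n(1)] x unfolding two_sided_ideal_def by blast
    then show "act s w x \<in> V B" if "B \<in> cls - {C}" "w \<in> V B" for B w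
      using act_in_sub_bimodule sub_bimodule_block_elems that by blast
    show "act s w x \<in> N" if "w \<in> V C" for w
      using n(2) x that unfolding killed_def by blast
    show "v \<in> block_sum N cls V"
      using strong_block unfolding strong_block_def by blast
  qed
  have "act_span s n \<subseteq> block_sum N (cls - {C}) V"
    using add act subset_block_sum additive_subgroup_zero[OF additive_subgroup]
    by (intro act_span_subset) blast+
  then show ?thesis
    using add subset_block_sum by (blast elim: ssumE)
qed

lemma bimod_iso_block_quotient:
  assumes C: "C \<in> cls" and n: "n \<in> Wd G C" "V C \<subseteq> killed s N n"
  shows "\<exists>\<phi>. bimod_iso G (ssum N (act_span s n)) N (coset N ` V C) \<phi>"
proof (rule bimod_iso_quotient_complement[OF sub_bimodule _ _ sub_bimodule_block_elems[OF C]])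
  have span: "sub_bimodule G (act_span s n)"
    using two_sided_ideal_Wd_class[OF C n(1)] by (rule sub_bimodule_act_span)
  then show N1: "sub_bimodule G (ssum N (act_span s n))"
    using sub_bimodule by (intro sub_bimodule_ssum)
  show N_N1: "N \<subseteq> ssum N (act_span s n)"
    using span by (intro subset_ssum_left additive_subgroup_zero sub_bimoduleD)
  have V_add: "additive_subgroup (V C)"
    using sub_bimodule_block_elems[OF C] by (rule sub_bimoduleD)
  have "direct_mod N cls V"
    using strong_block unfolding strong_block_def by blast
  then show "V C \<inter> ssum N (act_span s n) \<subseteq> N"
    using direct_mod_inter_others[where V = V, OF additive_subgroup V_add _ C]
      kernel_subset_block_sum[OF C n] by blast
  show "\<exists>c\<in>V C. a - c \<in> ssum N (act_span s n)" for a
    using sub_bimoduleD(1)[OF N1] N_N1 _ C additive_subgroup_zero[OF V_add]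
  proof (rule block_sum_UNIV_split)
    show "block_sum N cls V = UNIV"
      using strong_block unfolding strong_block_def by blast
    show "V B \<subseteq> ssum N (act_span s n)" if "B \<in> cls - {C}" for B
      using block_elems_subset_kernel[OF C n(1)] that by blast
  qed
qed

end

lemma strong_block_right_module:
  assumes "strong_HC_block scale G R" "D \<in> cfs scale G // R" "l \<in> Wd G D" "two_sided_ideal G l"
  shows "strong_block Right G (cfs scale G // R) (sprod l UNIV)"
proof -
  have "sub_bimodule G (sprod l UNIV)"
    using sub_bimodule_act_span[OF assms(4), of Left] by simp
  moreover have "strong_block_right G (cfs scale G // R) (sprod l UNIV)"
    using assms(1-3) unfolding strong_HC_block_def by blast
  ultimately show ?thesis
    by (intro strong_block_if_strong_block_right sub_bimoduleD(1)) (auto simp: sprod_mult_right)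
qed

lemma strong_block_left_module:
  assumes "strong_HC_block scale G R" "B \<in> cfs scale G // R" "m \<in> Wd G B" "two_sided_ideal G m"
  shows "strong_block Left G (cfs scale G // R) (sprod UNIV m)"
proof -
  have "sub_bimodule G (sprod UNIV m)"
    using sub_bimodule_act_span[OF assms(4), of Right] by simp
  moreover have "strong_block_left G (cfs scale G // R) (sprod UNIV m)"
    using assms(1-3) unfolding strong_HC_block_def by blast
  ultimately show ?thesis
    by (intro strong_block_if_strong_block_left sub_bimoduleD(1)) (auto simp: sprod_mult_left)
qed

lemma rblock_quotient_iso:
  assumes G: "subring G" and R: "equiv (cfs scale G) R" and C: "C \<in> cfs scale G // R"
    and l: "two_sided_ideal G l" and blocks: "strong_block Right G (cfs scale G // R) (sprod l UNIV)"
    and n: "n \<in> Wd G C" "block_elems Right G (sprod l UNIV) C \<subseteq> killed Right (sprod l UNIV) n"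
  shows "\<exists>\<phi>. bimod_iso G (ssum (sprod l UNIV) (sprod UNIV n)) (sprod l UNIV)
    (rblock G (sprod l UNIV) C) \<phi>"
proof -
  have N: "sub_bimodule G (sprod l UNIV)"
    using sub_bimodule_act_span[OF l, of Left] by simp
  have mult: "k * a \<in> sprod l UNIV" if "k \<in> sprod l UNIV" for k a
    using that by (simp add: sprod_mult_right)
  have "\<exists>\<phi>. bimod_iso G (ssum (sprod l UNIV) (act_span Right n)) (sprod l UNIV)
      (coset (sprod l UNIV) ` block_elems Right G (sprod l UNIV) C) \<phi>"
    by (rule strong_block_quotient.bimod_iso_block_quotient
        [OF strong_block_quotient.intro[OF G R N _ blocks] C n]) (simp add: mult)
  then show ?thesis
    using rblock_eq_image[OF sub_bimoduleD(1)[OF N] mult] by simp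
qed

lemma lblock_quotient_iso:
  assumes G: "subring G" and R: "equiv (cfs scale G) R" and C: "C \<in> cfs scale G // R"
    and m: "two_sided_ideal G m" and blocks: "strong_block Left G (cfs scale G // R) (sprod UNIV m)"
    and n: "n \<in> Wd G C" "block_elems Left G (sprod UNIV m) C \<subseteq> killed Left (sprod UNIV m) n"
  shows "\<exists>\<phi>. bimod_iso G (ssum (sprod n UNIV) (sprod UNIV m)) (sprod UNIV m)
    (lblock G (sprod UNIV m) C) \<phi>"
proof -
  have N: "sub_bimodule G (sprod UNIV m)"
    using sub_bimodule_act_span[OF m, of Right] by simp
  have mult: "a * k \<in> sprod UNIV m" if "k \<in> sprod UNIV m" for k a
    using that by (simp add: sprod_mult_left)
  have "\<exists>\<phi>. bimod_iso G (ssum (sprod UNIV m) (act_span Left n)) (sprod UNIV m)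
      (coset (sprod UNIV m) ` block_elems Left G (sprod UNIV m) C) \<phi>"
    by (rule strong_block_quotient.bimod_iso_block_quotient
        [OF strong_block_quotient.intro[OF G R N _ blocks] C n]) (simp add: mult)
  then show ?thesis
    using lblock_eq_image[OF sub_bimoduleD(1)[OF N] mult] ssum_commute[of "sprod n UNIV"] by simp
qed

theorem mainTheorem18:
  fixes scale :: "'k::field \<Rightarrow> 'a::ring_1 \<Rightarrow> 'a"
    and G :: "'a set" and R :: "'a set rel"
    and B C D :: "'a set set" and m l :: "'a set"
  assumes "k_algebra scale"
    and "subalgebra scale G"
    and "equiv (cfs scale G) R"
    and "strong_HC_block scale G R"
    and "B \<in> cfs scale G // R" and "C \<in> cfs scale G // R" and "D \<in> cfs scale G // R"
    and "m \<in> Wd G B" and "l \<in> Wd G D"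
  shows "\<exists>n\<in>Wd G C.
           (\<exists>\<phi>. bimod_iso G (ssum (sprod l UNIV) (sprod UNIV n)) (sprod l UNIV)
                   (rblock G (sprod l UNIV) C) \<phi>) \<and>
           (\<exists>\<psi>. bimod_iso G (ssum (sprod n UNIV) (sprod UNIV m)) (sprod UNIV m)
                   (lblock G (sprod UNIV m) C) \<psi>)"
proof -
  have G: "subring G"
    using assms(1,2) by (rule subring_if_subalgebra)
  have classes: "X \<subseteq> cfs scale G" if "X \<in> cfs scale G // R" for X
    using assms(3) that by (rule in_quotient_imp_subset)
  have ideals: "two_sided_ideal G l" "two_sided_ideal G m"
    using two_sided_ideal_Wd[OF G classes] assms(5,7,8,9) by blast+
  note blocks = strong_block_right_module[OF assms(4,7,9) ideals(1)]
    strong_block_left_module[OF assms(4,5,8) ideals(2)]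
  obtain mr where mr: "mr \<in> Wd G C"
      "block_elems Right G (sprod l UNIV) C \<subseteq> killed Right (sprod l UNIV) mr"
    using blocks(1) assms(6) unfolding strong_block_def by blast
  obtain ml where ml: "ml \<in> Wd G C"
      "block_elems Left G (sprod UNIV m) C \<subseteq> killed Left (sprod UNIV m) ml"
    using blocks(2) assms(6) unfolding strong_block_def by blast
  obtain n where n: "n \<in> Wd G C" "n \<subseteq> mr" "n \<subseteq> ml"
    using Wd_lower_bound[OF G classes[OF assms(6)] mr(1) ml(1)] by blast
  have "\<exists>\<phi>. bimod_iso G (ssum (sprod l UNIV) (sprod UNIV n)) (sprod l UNIV)
      (rblock G (sprod l UNIV) C) \<phi>"
    using mr(2) killed_antimono[OF n(2)]
    by (intro rblock_quotient_iso[OF G assms(3,6) ideals(1) blocks(1) n(1)]) blast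
  moreover have "\<exists>\<psi>. bimod_iso G (ssum (sprod n UNIV) (sprod UNIV m)) (sprod UNIV m)
      (lblock G (sprod UNIV m) C) \<psi>"
    using ml(2) killed_antimono[OF n(3)]
    by (intro lblock_quotient_iso[OF G assms(3,6) ideals(2) blocks(2) n(1)]) blast
  ultimately show ?thesis
    using n(1) by blast
qed

end
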